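(* Let $h_1,h_2,g_1,g_2>0$ be real numbers. For $\Delta_1,\Delta_2>0$ and $\Omega\subseteq\{1,2\}$ define (logarithms base $2$, $[x]^+=\max\{x,0\}$) \begin{align*} R(\emptyset;\Delta_1,\Delta_2)&=\Big[\log\Big(1+\tfrac{h_1^2}{1+\Delta_1}+\tfrac{h_2^2}{1+\Delta_2}\Big)\Big]^+,\\ R(\{1\};\Delta_1,\Delta_2)&=\Big[\log(1+g_1^2)+\log\Big(1+\tfrac{h_2^2}{1+\Delta_2}\Big)-\log\tfrac{1+\Delta_1}{\Delta_1}\Big]^+,\\ R(\{2\};\Delta_1,\Delta_2)&=\Big[\log(1+g_2^2)+\log\Big(1+\tfrac{h_1^2}{1+\Delta_1}\Big)-\log\tfrac{1+\Delta_2}{\Delta_2}\Big]^+,\\ R(\{1,2\};\Delta_1,\Delta_2)&=\Big[\log(1+g_1^2+g_2^2)-\log\tfrac{1+\Delta_1}{\Delta_1}-\log\tfrac{1+\Delta_2}{\Delta_2}\Big]^+, \end{align*} and consider the problem $\max_{\Delta_2>0}\max_{\Delta_1>0}\min_{\Omega\subseteq\{1,2\}}R(\Omega;\Delta_1,\Delta_2)$. Let $$\delta_1:=\frac{(1+g_1^2+g_2^2)(1+h_1^2+h_2^2)+(1+g_2^2)h_1^2h_2^2}{g_2^2(1+g_1^2+g_2^2)(1+h_1^2)},\qquad \delta_2:=\frac{(1+g_1^2)(1+h_2^2)}{g_2^2},$$ $\mathcal I_1=(0,\delta_1)$, $\mathcal I_2=[\delta_1,\delta_2)$, $\mathcal I_3=[\delta_2,\infty)$,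 and $A:=h_1^2(1+h_1^2)-h_2^2(1+h_1^2+g_1^2+g_2^2)$, $B:=2h_1^2(1+h_1^2)$, $C:=h_1^2(1+h_1^2+h_2^2)$, $\delta_3:=\frac{-B-\sqrt{B^2-4AC}}{2A}$. Then an optimal solution $(\Delta_1^*,\Delta_2^* )$ of this problem is: \begin{enumerate} \item if $A\ge 0$ or $\delta_3\in\mathcal I_3$: $\Delta_2^*=\delta_2$ and $\Delta_1^*=\frac{(1+h_1^2)\delta_2+(1+h_1^2+h_2^2)}{(g_1^2+g_2^2)\delta_2-(1+h_2^2)}=\frac{(1+h_1^2)\delta_2+(1+h_1^2+h_2^2)}{g_1^2(\delta_2+(1+h_2^2))}$; \item if $A<0$ and $\delta_3\in\mathcal I_1$: $\Delta_2^*=\delta_1$ and $\Delta_1^*=\frac{(1+h_1^2)\delta_1+(1+h_1^2+h_2^2)}{(g_1^2+g_2^2)\delta_1-(1+h_2^2)}=\frac{(1+g_2^2)(1+h_1^2)}{g_1^2}$; \item if $A<0$ and $\delta_3\in\mathcal I_2$: $\Delta_2^*=\delta_3$ and $\Delta_1^*=\frac{(1+h_1^2)\delta_3+(1+h_1^2+h_2^2)}{(g_1^2+g_2^2)\delta_3-(1+h_2^2)}$. \end{enumerate}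
   Context: This concerns the full-duplex two-relay Gaussian diamond network (source, relays $A_1,A_2$, destination) with channel magnitudes $h_i$ (source to relay $i$) and $g_i$ (relay $i$ to destination), in which relay $i$ performs quantize-map-and-forward with a Gaussian vector quantizer of distortion $\Delta_i$; $\min_\Omega R(\Omega;\Delta_1,\Delta_2)$ is the resulting achievable rate, and the problem is to choose the distortions maximizing it given the channel magnitudes. *)

theory Defs
  imports Complex_Main
begin

definition pos_part :: "real \<Rightarrow> real" where
  "pos_part x = max x 0"

definition Rate :: "real \<Rightarrow> real \<Rightarrow> real \<Rightarrow> real \<Rightarrow> nat set \<Rightarrow> real \<Rightarrow> real \<Rightarrow> real" where
  "Rate h1 h2 g1 g2 \<Omega> D1 D2 =
    (if \<Omega> = {} then pos_part (log 2 (1 + h1\<^sup>2 / (1 + D1) + h2\<^sup>2 / (1 + D2)))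
     else if \<Omega> = {1} then pos_part (log 2 (1 + g1\<^sup>2) + log 2 (1 + h2\<^sup>2 / (1 + D2))
                                   - log 2 ((1 + D1) / D1))
     else if \<Omega> = {2} then pos_part (log 2 (1 + g2\<^sup>2) + log 2 (1 + h1\<^sup>2 / (1 + D1))
                                   - log 2 ((1 + D2) / D2))
     else pos_part (log 2 (1 + g1\<^sup>2 + g2\<^sup>2) - log 2 ((1 + D1) / D1) - log 2 ((1 + D2) / D2)))"

definition MinRate :: "real \<Rightarrow> real \<Rightarrow> real \<Rightarrow> real \<Rightarrow> real \<Rightarrow> real \<Rightarrow> real" where
  "MinRate h1 h2 g1 g2 D1 D2 = Min ((\<lambda>\<Omega>. Rate h1 h2 g1 g2 \<Omega> D1 D2) ` Pow {1, 2})"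

definition optimal_QMF :: "real \<Rightarrow> real \<Rightarrow> real \<Rightarrow> real \<Rightarrow> real \<Rightarrow> real \<Rightarrow> bool" where
  "optimal_QMF h1 h2 g1 g2 D1s D2s \<longleftrightarrow>
     D1s > 0 \<and> D2s > 0 \<and>
     (\<forall>D1 D2. D1 > 0 \<longrightarrow> D2 > 0 \<longrightarrow> MinRate h1 h2 g1 g2 D1 D2 \<le> MinRate h1 h2 g1 g2 D1s D2s)"

end

theory Submission
  imports Defs
begin

text \<open>
  Put \<open>u = \<Delta>1/(1+\<Delta>1)\<close> and \<open>w = \<Delta>2/(1+\<Delta>2)\<close>. Each cut rate is \<open>[log E\<^sub>\<Omega>(u,w)]\<^sup>+\<close>,
  where \<open>E\<^sub>\<emptyset> = 1 + h1\<^sup>2(1-u) + h2\<^sup>2(1-w)\<close>, \<open>E\<^sub>1\<^sub>2 = (1+g1\<^sup>2+g2\<^sup>2)uw\<close>, and \<open>E\<^sub>1\<close> increases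
  in \<open>u\<close> and decreases in \<open>w\<close> while \<open>E\<^sub>2\<close> does the opposite. Suppose the minimum of the four
  values at \<open>(u0,w0)\<close> is \<open>E\<^sub>\<emptyset> = E\<^sub>1\<^sub>2\<close>. A point where all four values are larger lies in the
  half-plane \<open>h1\<^sup>2u + h2\<^sup>2w < h1\<^sup>2u0 + h2\<^sup>2w0\<close> and above the hyperbola \<open>uw = u0w0\<close>. If the
  line is tangent to the hyperbola (\<open>h1\<^sup>2u0 = h2\<^sup>2w0\<close>) no such point exists; otherwise these
  points form a lens on one side of \<open>(u0,w0)\<close>, on which \<open>E\<^sub>1\<close> (if \<open>h1\<^sup>2u0 > h2\<^sup>2w0\<close>) or
  \<open>E\<^sub>2\<close> (otherwise) is smaller than at \<open>(u0,w0)\<close>. So \<open>(u0,w0)\<close> is optimal as soon as that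
  cut is minimal there as well.

  The candidates lie on the curve \<open>E\<^sub>\<emptyset> = E\<^sub>1\<^sub>2\<close>, i.e. \<open>\<Delta>1 = D1of \<Delta>2\<close>. Along it
  \<open>E\<^sub>2 \<ge> E\<^sub>1\<^sub>2\<close> exactly for \<open>\<Delta>2 \<ge> \<delta>1\<close>, \<open>E\<^sub>1 \<ge> E\<^sub>1\<^sub>2\<close> exactly for \<open>\<Delta>2 \<le> \<delta>2\<close>, and
  \<open>h1\<^sup>2u - h2\<^sup>2w\<close> has the sign of \<open>A\<Delta>2\<^sup>2 + B\<Delta>2 + C\<close>, whose positive root for \<open>A < 0\<close> is
  \<open>\<delta>3\<close>. The three cases of the theorem are the three ways to satisfy the condition above
  on \<open>[\<delta>1, \<delta>2]\<close>.
\<close>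

text \<open>Here \<open>a, b, c, d\<close> stand for \<open>h1\<^sup>2, h2\<^sup>2, g1\<^sup>2, g2\<^sup>2\<close> and \<open>u, w\<close> for \<open>\<Delta>i/(1+\<Delta>i)\<close>.\<close>

definition cut_arg :: "real \<Rightarrow> real \<Rightarrow> real \<Rightarrow> real \<Rightarrow> nat set \<Rightarrow> real \<Rightarrow> real \<Rightarrow> real" where
  "cut_arg a b c d \<Omega> u w =
    (if \<Omega> = {} then 1 + a * (1 - u) + b * (1 - w)
     else if \<Omega> = {1} then (1 + c) * (1 + b * (1 - w)) * u
     else if \<Omega> = {2} then (1 + d) * (1 + a * (1 - u)) * w
     else (1 + c + d) * u * w)"

lemma cut_arg_pos:
  assumes "a \<ge> 0" "b \<ge> 0" "c \<ge> 0" "d \<ge> 0" "0 < u" "u < 1" "0 < w" "w < 1"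
  shows "cut_arg a b c d \<Omega> u w > 0"
  using assms unfolding cut_arg_def by (auto intro!: mult_pos_pos add_pos_nonneg)

lemma frac_one_plus:
  assumes "x > (0::real)"
  shows "0 < x / (1 + x)" "x / (1 + x) < 1" "1 - x / (1 + x) = 1 / (1 + x)"
  using assms by (simp_all add: field_simps)

lemma Rate_eq_cut_arg:
  assumes "x > 0" "y > 0"
  shows "Rate h1 h2 g1 g2 \<Omega> x y
           = pos_part (log 2 (cut_arg (h1^2) (h2^2) (g1^2) (g2^2) \<Omega> (x / (1 + x)) (y / (1 + y))))"
proof -
  have inv: "log 2 ((1 + t) / t) = - log 2 (t / (1 + t))" if "t > 0" for t :: real
    using that by (simp add: log_divide)
  have log3: "log 2 (p * q * r) = log 2 p + log 2 q + log 2 r" if "p > 0" "q > 0" "r > 0" for p q r :: real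
    using that by (simp add: log_mult)
  have pos: "0 < 1 + h1^2 / (1 + x)" "0 < 1 + h2^2 / (1 + y)" "0 < 1 + g1^2" "0 < 1 + g2^2"
    "0 < 1 + g1^2 + g2^2" "0 < x / (1 + x)" "0 < y / (1 + y)"
    using assms by (auto intro!: add_pos_nonneg)
  show ?thesis
    using log3[OF pos(3,2,6)] log3[OF pos(4,1,7)] log3[OF pos(5,6,7)]
    unfolding Rate_def cut_arg_def inv[OF assms(1)] inv[OF assms(2)]
      frac_one_plus(3)[OF assms(1)] frac_one_plus(3)[OF assms(2)]
    by simp
qed

definition min_cut_arg :: "real \<Rightarrow> real \<Rightarrow> real \<Rightarrow> real \<Rightarrow> real \<Rightarrow> real \<Rightarrow> real" where
  "min_cut_arg a b c d x y = Min ((\<lambda>\<Omega>. cut_arg a b c d \<Omega> (x / (1 + x)) (y / (1 + y))) ` Pow {1, 2})"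

definition maximizes_min_cut :: "real \<Rightarrow> real \<Rightarrow> real \<Rightarrow> real \<Rightarrow> real \<Rightarrow> real \<Rightarrow> bool" where
  "maximizes_min_cut a b c d xs ys \<longleftrightarrow> xs > 0 \<and> ys > 0 \<and>
     (\<forall>x y. x > 0 \<longrightarrow> y > 0 \<longrightarrow> min_cut_arg a b c d x y \<le> min_cut_arg a b c d xs ys)"

text \<open>Unlike \<open>pos_part \<circ> log 2\<close>, this form is monotone on all reals and so commutes with \<open>Min\<close>.\<close>

lemma pos_part_log_eq: "t > 0 \<Longrightarrow> pos_part (log 2 t) = log 2 (max t 1)"
  by (simp add: pos_part_def max_def)

lemma mono_log_max_one: "mono (\<lambda>t. log 2 (max t 1))"
  by (rule monoI) simp

lemma MinRate_eq_min_cut_arg: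
  assumes "x > 0" "y > 0"
  shows "MinRate h1 h2 g1 g2 x y = log 2 (max (min_cut_arg (h1^2) (h2^2) (g1^2) (g2^2) x y) 1)"
proof -
  let ?E = "\<lambda>\<Omega>. cut_arg (h1^2) (h2^2) (g1^2) (g2^2) \<Omega> (x / (1 + x)) (y / (1 + y))"
  have "MinRate h1 h2 g1 g2 x y = Min ((\<lambda>t. log 2 (max t 1)) ` ?E ` Pow {1, 2})"
    unfolding MinRate_def image_image
  proof (intro arg_cong[where f = Min] image_cong refl)
    fix \<Omega> :: "nat set"
    have "?E \<Omega> > 0"
      using assms by (intro cut_arg_pos) (simp_all add: frac_one_plus)
    then show "Rate h1 h2 g1 g2 \<Omega> x y = log 2 (max (?E \<Omega>) 1)"
      using assms by (simp add: Rate_eq_cut_arg pos_part_log_eq)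
  qed
  also have "\<dots> = log 2 (max (Min (?E ` Pow {1, 2})) 1)"
    by (rule mono_Min_commute[OF mono_log_max_one, symmetric]) auto
  finally show ?thesis
    unfolding min_cut_arg_def .
qed

lemma optimal_QMF_if_maximizes_min_cut:
  assumes "maximizes_min_cut (h1^2) (h2^2) (g1^2) (g2^2) xs ys"
  shows "optimal_QMF h1 h2 g1 g2 xs ys"
  using assms monoD[OF mono_log_max_one]
  unfolding optimal_QMF_def maximizes_min_cut_def by (simp add: MinRate_eq_min_cut_arg)

lemma tangent_pos_if_prod_gt:
  fixes P Q P0 Q0 :: real
  assumes "P > 0" "Q > 0" "P0 > 0" "Q0 > 0" "P0 * Q0 < P * Q"
  shows "0 < (P - P0) * Q0 + (Q - Q0) * P0"
proof -
  have "(P0 * Q0) * (P0 * Q0) < (P * Q) * (P0 * Q0)"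
    using assms by (intro mult_strict_right_mono) auto
  \<comment> \<open>AM-GM for \<open>P Q0\<close> and \<open>Q P0\<close>\<close>
  moreover have "(P * Q0 + Q * P0)^2 = (P * Q0 - Q * P0)^2 + 4 * ((P * Q) * (P0 * Q0))"
    "(2 * (P0 * Q0))^2 = 4 * ((P0 * Q0) * (P0 * Q0))"
    by algebra+
  ultimately have "(2 * (P0 * Q0))^2 < (P * Q0 + Q * P0)^2"
    using zero_le_power2[of "P * Q0 - Q * P0"] by linarith
  then have "2 * (P0 * Q0) < P * Q0 + Q * P0"
    by (rule power_less_imp_less_base) (use assms in auto)
  then show ?thesis
    by (simp add: algebra_simps)
qed

lemma weighted_sum_gt_if_tangent:
  fixes a b U W U0 W0 :: real
  assumes "a > 0" "U > 0" "W > 0" "U0 > 0" "W0 > 0"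
    and "a * U0 = b * W0" "U0 * W0 < U * W"
  shows "a * U0 + b * W0 < a * U + b * W"
proof -
  have "0 < a * ((U - U0) * W0 + (W - W0) * U0)"
    using assms tangent_pos_if_prod_gt[of U W U0 W0] by simp
  also have "\<dots> = W0 * (a * (U - U0) + b * (W - W0))"
    using arg_cong[OF assms(6), of "\<lambda>t. t * (W - W0)"] by (simp add: algebra_simps)
  finally have "0 < a * (U - U0) + b * (W - W0)"
    using assms(5) zero_less_mult_pos by blast
  then show ?thesis
    by (simp add: algebra_simps)
qed

lemma lens_side_if_tangent_le:
  fixes a b U W U0 W0 :: real
  assumes "a > 0" "b \<ge> 0" "U > 0" "W > 0" "U0 > 0" "W0 > 0"
    and "b * W0 \<le> a * U0" "U0 * W0 < U * W" "a * U + b * W < a * U0 + b * W0"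
  shows "U < U0 \<and> W0 < W"
proof -
  have "W0 < W"
  proof (rule ccontr)
    assume "\<not> W0 < W"
    then have "(W0 - W) * (b * W0) \<le> (W0 - W) * (a * U0)"
      using assms(7) by (intro mult_left_mono) auto
    moreover have "0 < a * ((U - U0) * W0 + (W - W0) * U0)"
      using assms tangent_pos_if_prod_gt[of U W U0 W0] by simp
    ultimately have "0 < W0 * (a * (U - U0) + b * (W - W0))"
      by (simp add: algebra_simps)
    then have "0 < a * (U - U0) + b * (W - W0)"
      using assms(6) zero_less_mult_pos by blast
    with assms(9) show False
      by (simp add: algebra_simps)
  qed
  moreover have "a * U < a * U0"
    using \<open>W0 < W\<close> assms(2,9) mult_left_mono[of W0 W b] by linarith
  ultimately show ?thesis
    using assms(1) by simp
qed

lemma exists_cut_arg_le: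
  fixes a b c d u w u0 w0 :: real
  assumes pos: "a > 0" "b > 0" "c \<ge> 0" "d \<ge> 0"
    and unit: "0 < u" "u < 1" "0 < w" "w < 1" "0 < u0" "u0 < 1" "0 < w0" "w0 < 1"
  defines "E \<equiv> cut_arg a b c d"
  assumes balanced: "E {} u0 w0 = E {1, 2} u0 w0"
    and tie: "(E {1} u0 w0 = E {1, 2} u0 w0 \<and> b * w0 \<le> a * u0)
            \<or> (E {2} u0 w0 = E {1, 2} u0 w0 \<and> a * u0 \<le> b * w0)
            \<or> a * u0 = b * w0"
  shows "\<exists>\<Omega>\<in>Pow {1, 2}. E \<Omega> u w \<le> E {} u0 w0"
proof (rule ccontr)
  assume "\<not> ?thesis"
  then have gt: "E {} u0 w0 < E \<Omega> u w" if "\<Omega> \<in> Pow {1, 2}" for \<Omega>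
    using that by (meson not_le)
  have sum: "a * u + b * w < a * u0 + b * w0"
    using gt[of "{}"] unfolding E_def cut_arg_def by (simp add: algebra_simps)
  have "(1 + c + d) * (u0 * w0) < (1 + c + d) * (u * w)"
    using gt[of "{1, 2}"] balanced unfolding E_def cut_arg_def by (simp add: mult.assoc)
  then have prod: "u0 * w0 < u * w"
    using pos by (simp add: mult_less_cancel_left_pos)
  have shrink: "(1 + k) * (1 + m * (1 - s)) * t < (1 + k) * (1 + m * (1 - s0)) * t0"
    if "k \<ge> 0" "m \<ge> 0" "0 < t" "t < t0" "s0 \<le> s" "s < 1" for k m s t s0 t0 :: real
  proof -
    have "m * (1 - s) \<le> m * (1 - s0)"
      using that by (intro mult_left_mono) auto
    then have "(1 + m * (1 - s)) * t < (1 + m * (1 - s0)) * t0"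
      using that by (intro mult_le_less_imp_less add_pos_nonneg) auto
    then show ?thesis
      using that(1) by (simp add: mult.assoc)
  qed
  from tie show False
  proof (elim disjE conjE)
    assume "E {1} u0 w0 = E {1, 2} u0 w0" "b * w0 \<le> a * u0"
    then have "u < u0 \<and> w0 < w"
      using pos unit prod sum by (intro lens_side_if_tangent_le) auto
    then have "E {1} u w < E {1} u0 w0"
      using pos unit shrink[of c b u u0 w0 w] unfolding E_def cut_arg_def by simp
    then show False
      using gt[of "{1}"] balanced \<open>E {1} u0 w0 = E {1, 2} u0 w0\<close> by simp
  next
    assume "E {2} u0 w0 = E {1, 2} u0 w0" "a * u0 \<le> b * w0"
    then have "w < w0 \<and> u0 < u"
      using lens_side_if_tangent_le[of b a w u w0 u0] pos unit prod sum
      by (simp add: mult.commute add.commute)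
    then have "E {2} u w < E {2} u0 w0"
      using pos unit shrink[of d a w w0 u0 u] unfolding E_def cut_arg_def by simp
    then show False
      using gt[of "{2}"] balanced \<open>E {2} u0 w0 = E {1, 2} u0 w0\<close> by simp
  next
    assume "a * u0 = b * w0"
    then show False
      using weighted_sum_gt_if_tangent[of a u w u0 w0 b] pos unit prod sum by simp
  qed
qed

lemma maximizes_min_cut_if_balanced:
  fixes a b c d xs ys :: real
  assumes pos: "a > 0" "b > 0" "c \<ge> 0" "d \<ge> 0" and "xs > 0" "ys > 0"
  defines "u0 \<equiv> xs / (1 + xs)" and "w0 \<equiv> ys / (1 + ys)"
    and "E \<equiv> cut_arg a b c d"
  assumes balanced: "E {} u0 w0 = E {1, 2} u0 w0"
    and active: "E {1, 2} u0 w0 \<le> E {1} u0 w0" "E {1, 2} u0 w0 \<le> E {2} u0 w0"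
    and tie: "(E {1} u0 w0 = E {1, 2} u0 w0 \<and> b * w0 \<le> a * u0)
            \<or> (E {2} u0 w0 = E {1, 2} u0 w0 \<and> a * u0 \<le> b * w0)
            \<or> a * u0 = b * w0"
  shows "maximizes_min_cut a b c d xs ys"
proof -
  have "min_cut_arg a b c d xs ys = E {} u0 w0"
    unfolding min_cut_arg_def u0_def[symmetric] w0_def[symmetric] E_def[symmetric]
    using balanced active by (intro Min_eqI) (auto simp: Pow_insert)
  moreover have "min_cut_arg a b c d x y \<le> E {} u0 w0" if xy: "x > 0" "y > 0" for x y
  proof -
    obtain \<Omega> where "\<Omega> \<in> Pow {1, 2}" "E \<Omega> (x / (1 + x)) (y / (1 + y)) \<le> E {} u0 w0"
      using exists_cut_arg_le[OF pos frac_one_plus(1,2)[OF xy(1)] frac_one_plus(1,2)[OF xy(2)]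
          frac_one_plus(1,2)[OF \<open>xs > 0\<close>] frac_one_plus(1,2)[OF \<open>ys > 0\<close>]] balanced tie
      unfolding E_def u0_def w0_def by blast
    then show ?thesis
      unfolding min_cut_arg_def E_def[symmetric]
      by (meson Min_le finite_imageI finite_Pow_iff finite.intros image_eqI order_trans)
  qed
  ultimately show ?thesis
    unfolding maximizes_min_cut_def using assms(5,6) by simp
qed

lemma cut_arg_empty_sub_12:
  assumes "x > 0" "y > 0"
  shows "cut_arg a b c d {} (x / (1 + x)) (y / (1 + y)) - cut_arg a b c d {1, 2} (x / (1 + x)) (y / (1 + y))
           = ((1 + a) * y + (1 + a + b) - x * ((c + d) * y - (1 + b))) / ((1 + x) * (1 + y))"
  using assms
  by (simp add: cut_arg_def field_simps add_pos_pos) (simp add: add_divide_distrib[symmetric] algebra_simps)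

lemma cut_arg_1_sub_12:
  assumes "x > 0" "y > 0"
  shows "cut_arg a b c d {1} (x / (1 + x)) (y / (1 + y)) - cut_arg a b c d {1, 2} (x / (1 + x)) (y / (1 + y))
           = x / (1 + x) * ((1 + c) * (1 + b) - d * y) / (1 + y)"
  using assms
  by (simp add: cut_arg_def field_simps add_pos_pos) (simp add: add_divide_distrib[symmetric] algebra_simps)

lemma cut_arg_2_sub_12:
  assumes "x > 0" "y > 0"
  shows "cut_arg a b c d {2} (x / (1 + x)) (y / (1 + y)) - cut_arg a b c d {1, 2} (x / (1 + x)) (y / (1 + y))
           = y / (1 + y) * ((1 + d) * (1 + a) - c * x) / (1 + x)"
  using assms
  by (simp add: cut_arg_def field_simps add_pos_pos) (simp add: add_divide_distrib[symmetric] algebra_simps)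

definition balanced_D1 :: "real \<Rightarrow> real \<Rightarrow> real \<Rightarrow> real \<Rightarrow> real \<Rightarrow> real" where
  "balanced_D1 a b c d y = ((1 + a) * y + (1 + a + b)) / ((c + d) * y - (1 + b))"

lemma balanced_D1_pos:
  assumes "a \<ge> 0" "b \<ge> 0" "y > 0" "1 + b < (c + d) * y"
  shows "balanced_D1 a b c d y > 0"
  using assms unfolding balanced_D1_def by (intro divide_pos_pos) (auto intro!: add_pos_nonneg)

lemma cut_arg_balanced_D1:
  assumes "a \<ge> 0" "b \<ge> 0" "y > 0" "1 + b < (c + d) * y"
  defines "x \<equiv> balanced_D1 a b c d y"
  shows "cut_arg a b c d {} (x / (1 + x)) (y / (1 + y)) = cut_arg a b c d {1, 2} (x / (1 + x)) (y / (1 + y))"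
proof -
  have "x * ((c + d) * y - (1 + b)) = (1 + a) * y + (1 + a + b)"
    using assms(4) unfolding x_def balanced_D1_def by simp
  then show ?thesis
    using cut_arg_empty_sub_12[of x y a b c d] balanced_D1_pos[OF assms(1-4)] assms(3)
    unfolding x_def by simp
qed

lemma balanced_D1_antimono:
  assumes "a \<ge> 0" "b \<ge> 0" "c \<ge> 0" "d \<ge> 0" "1 + b < (c + d) * y1" "y1 \<le> y2"
  shows "balanced_D1 a b c d y2 \<le> balanced_D1 a b c d y1"
proof -
  have "(c + d) * y1 \<le> (c + d) * y2"
    using assms by (intro mult_left_mono) auto
  then have den: "0 < (c + d) * y1 - (1 + b)" "0 < (c + d) * y2 - (1 + b)"
    using assms(5) by linarith+
  have "((1 + a) * y2 + (1 + a + b)) * ((c + d) * y1 - (1 + b))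
          - ((1 + a) * y1 + (1 + a + b)) * ((c + d) * y2 - (1 + b))
        = ((1 + a) * (1 + b) + (1 + a + b) * (c + d)) * (y1 - y2)"
    by (simp add: algebra_simps)
  also have "\<dots> \<le> 0"
    using assms by (intro mult_nonneg_nonpos) auto
  finally show ?thesis
    unfolding balanced_D1_def using den by (simp add: divide_le_eq le_divide_eq mult.commute)
qed

text \<open>\<open>tie_lead\<close>, \<open>2a(1+a)\<close> and \<open>a(1+a+b)\<close> are the constants \<open>A\<close>, \<open>B\<close>, \<open>C\<close> of the theorem.\<close>

definition tie_lead :: "real \<Rightarrow> real \<Rightarrow> real \<Rightarrow> real \<Rightarrow> real" where
  "tie_lead a b c d = a * (1 + a) - b * (1 + a + c + d)"

definition tie_quadratic :: "real \<Rightarrow> real \<Rightarrow> real \<Rightarrow> real \<Rightarrow> real \<Rightarrow> real" where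
  "tie_quadratic a b c d y = tie_lead a b c d * y^2 + 2 * a * (1 + a) * y + a * (1 + a + b)"

lemma balanced_D1_tie:
  assumes "a \<ge> 0" "b \<ge> 0" "c \<ge> 0" "d \<ge> 0" "y > 0" "1 + b < (c + d) * y"
  defines "x \<equiv> balanced_D1 a b c d y"
  shows "a * (x / (1 + x)) - b * (y / (1 + y))
           = tie_quadratic a b c d y / (((1 + a + c + d) * y + a) * (1 + y))"
proof -
  have S: "0 < (1 + a + c + d) * y + a"
    using assms by (intro add_pos_nonneg mult_pos_pos) auto
  define N where "N = (1 + a) * y + (1 + a + b)"
  define Dn where "Dn = (c + d) * y - (1 + b)"
  have "Dn > 0"
    using assms(6) unfolding Dn_def by simp
  then have "x / (1 + x) = N / (Dn + N)"
    unfolding x_def balanced_D1_def N_def[symmetric] Dn_def[symmetric] by (simp add: field_simps)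
  also have "Dn + N = (1 + a + c + d) * y + a"
    unfolding N_def Dn_def by (simp add: algebra_simps)
  finally have u: "x / (1 + x) = ((1 + a) * y + (1 + a + b)) / ((1 + a + c + d) * y + a)"
    unfolding N_def .
  show ?thesis
    using S assms(5) unfolding u tie_quadratic_def tie_lead_def
    by (simp add: field_simps) (simp add: algebra_simps power2_eq_square)
qed

lemma balanced_D1_tie_sign:
  assumes "a \<ge> 0" "b \<ge> 0" "c \<ge> 0" "d \<ge> 0" "y > 0" "1 + b < (c + d) * y"
  defines "x \<equiv> balanced_D1 a b c d y"
  shows "b * (y / (1 + y)) \<le> a * (x / (1 + x)) \<longleftrightarrow> 0 \<le> tie_quadratic a b c d y"
    and "a * (x / (1 + x)) \<le> b * (y / (1 + y)) \<longleftrightarrow> tie_quadratic a b c d y \<le> 0"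
proof -
  have "0 < ((1 + a + c + d) * y + a) * (1 + y)"
    using assms by (intro mult_pos_pos add_pos_nonneg) auto
  then have "0 \<le> a * (x / (1 + x)) - b * (y / (1 + y)) \<longleftrightarrow> 0 \<le> tie_quadratic a b c d y"
    "a * (x / (1 + x)) - b * (y / (1 + y)) \<le> 0 \<longleftrightarrow> tie_quadratic a b c d y \<le> 0"
    unfolding x_def balanced_D1_tie[OF assms(1-6)]
    by (simp_all add: zero_le_divide_iff divide_le_0_iff)
  then show "b * (y / (1 + y)) \<le> a * (x / (1 + x)) \<longleftrightarrow> 0 \<le> tie_quadratic a b c d y"
    and "a * (x / (1 + x)) \<le> b * (y / (1 + y)) \<longleftrightarrow> tie_quadratic a b c d y \<le> 0"
    by linarith+
qed

lemma concave_quadratic_sign: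
  fixes A B C y :: real
  assumes "A < 0" "C > 0"
  defines "r \<equiv> (- B - sqrt (B^2 - 4 * A * C)) / (2 * A)"
  shows "0 \<le> y \<Longrightarrow> y \<le> r \<Longrightarrow> 0 \<le> A * y^2 + B * y + C"
    and "r < y \<Longrightarrow> A * y^2 + B * y + C < 0"
    and "A * r^2 + B * r + C = 0"
proof -
  define s where "s = sqrt (B^2 - 4 * A * C)"
  define r' where "r' = (- B + s) / (2 * A)"
  have "0 < - (4 * A * C)"
    using assms(1,2) by (simp add: mult_neg_pos)
  then have "0 \<le> B^2 - 4 * A * C"
    using zero_le_power2[of B] by linarith
  then have ss: "s^2 = B^2 - 4 * A * C" and "0 \<le> s"
    unfolding s_def by simp_all
  have "B^2 < s^2"
    using ss \<open>0 < - (4 * A * C)\<close> by linarith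
  then have "\<bar>B\<bar> < s"
    using power_less_imp_less_base[of "\<bar>B\<bar>" 2 s] \<open>0 \<le> s\<close> by simp
  have r: "2 * A * (z - r) = 2 * A * z + B + s" "2 * A * (z - r') = 2 * A * z + B - s" for z
    using assms(1) unfolding r_def s_def[symmetric] r'_def by (simp_all add: field_simps)
  have "0 < 2 * A * r'"
    using r(2)[of 0] \<open>\<bar>B\<bar> < s\<close> by (simp add: abs_less_iff)
  with assms(1) have "r' < 0"
    by (simp add: zero_less_mult_iff)
  have "2 * A * (r - r') \<le> 0"
    using r[of 0] \<open>0 \<le> s\<close> by (simp add: algebra_simps)
  with assms(1) have "r' \<le> r"
    by (simp add: mult_le_0_iff)
  have factor: "A * z^2 + B * z + C = A * (z - r) * (z - r')" for z
  proof -
    have "4 * A * (A * (z - r) * (z - r')) = (2 * A * (z - r)) * (2 * A * (z - r'))"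
      by (simp add: algebra_simps)
    also have "\<dots> = (2 * A * z + B)^2 - s^2"
      unfolding r by (simp add: algebra_simps power2_eq_square)
    also have "\<dots> = 4 * A * (A * z^2 + B * z + C)"
      unfolding ss by (simp add: algebra_simps power2_eq_square)
    finally show ?thesis
      using assms(1) by simp
  qed
  show "0 \<le> A * y^2 + B * y + C" if "0 \<le> y" "y \<le> r"
    unfolding factor using assms(1) that \<open>r' < 0\<close>
    by (intro mult_nonneg_nonneg mult_nonpos_nonpos) auto
  show "A * y^2 + B * y + C < 0" if "r < y"
    unfolding factor using assms(1) that \<open>r' \<le> r\<close>
    by (intro mult_neg_pos mult_neg_pos) auto
  show "A * r^2 + B * r + C = 0"
    unfolding factor by simp
qed

definition delta1 :: "real \<Rightarrow> real \<Rightarrow> real \<Rightarrow> real \<Rightarrow> real" where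
  "delta1 a b c d = ((1 + c + d) * (1 + a + b) + (1 + d) * a * b) / (d * (1 + c + d) * (1 + a))"

definition delta2 :: "real \<Rightarrow> real \<Rightarrow> real \<Rightarrow> real \<Rightarrow> real" where
  "delta2 a b c d = (1 + c) * (1 + b) / d"

definition delta3 :: "real \<Rightarrow> real \<Rightarrow> real \<Rightarrow> real \<Rightarrow> real" where
  "delta3 a b c d =
     (- (2 * a * (1 + a)) - sqrt ((2 * a * (1 + a))^2 - 4 * tie_lead a b c d * (a * (1 + a + b))))
     / (2 * tie_lead a b c d)"

lemma tie_quadratic_sign:
  assumes "a > 0" "b \<ge> 0" "tie_lead a b c d < 0"
  shows "0 \<le> y \<Longrightarrow> y \<le> delta3 a b c d \<Longrightarrow> 0 \<le> tie_quadratic a b c d y"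
    and "delta3 a b c d < y \<Longrightarrow> tie_quadratic a b c d y < 0"
    and "tie_quadratic a b c d (delta3 a b c d) = 0"
  using concave_quadratic_sign[where A = "tie_lead a b c d" and B = "2 * a * (1 + a)"
      and C = "a * (1 + a + b)"] assms
  unfolding tie_quadratic_def delta3_def by (simp_all add: add_pos_nonneg)

lemma delta1_admissible:
  assumes "a > 0" "b > 0" "c > 0" "d > 0"
  shows "1 + b < (c + d) * delta1 a b c d"
proof -
  have "(c + d) * ((1 + c + d) * (1 + a + b) + (1 + d) * a * b) - (1 + b) * (d * (1 + c + d) * (1 + a))
          = c * (1 + c + d) * (1 + a + b) + c * a * b"
    by (simp add: algebra_simps)
  also have "\<dots> > 0"
    using assms by (simp add: add_pos_pos)
  finally show ?thesis
    using assms unfolding delta1_def by (simp add: less_divide_eq)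
qed

lemma delta1_pos:
  assumes "a > 0" "b > 0" "c > 0" "d > 0"
  shows "0 < delta1 a b c d"
  using delta1_admissible[OF assms] assms zero_less_mult_pos[of "c + d" "delta1 a b c d"] by simp

lemma admissible_if_delta1_le:
  assumes "a > 0" "b > 0" "c > 0" "d > 0" "delta1 a b c d \<le> y"
  shows "0 < y" "1 + b < (c + d) * y"
proof -
  show "0 < y"
    using delta1_pos[OF assms(1-4)] assms(5) by linarith
  have "(c + d) * delta1 a b c d \<le> (c + d) * y"
    using assms by (intro mult_left_mono) auto
  then show "1 + b < (c + d) * y"
    using delta1_admissible[OF assms(1-4)] by linarith
qed

lemma delta1_le_delta2:
  assumes "a > 0" "b > 0" "c > 0" "d > 0"
  shows "delta1 a b c d \<le> delta2 a b c d"
proof -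
  have "(1 + c) * (1 + b) * (1 + c + d) * (1 + a) - ((1 + c + d) * (1 + a + b) + (1 + d) * a * b)
          = c * a * b + (1 + c + d) * c * (1 + a) * (1 + b)"
    by (simp add: algebra_simps)
  also have "\<dots> \<ge> 0"
    using assms by simp
  finally show ?thesis
    using assms unfolding delta1_def delta2_def by (simp add: divide_le_eq le_divide_eq ac_simps)
qed

lemma balanced_D1_delta1:
  assumes "a > 0" "b > 0" "c > 0" "d > 0"
  shows "balanced_D1 a b c d (delta1 a b c d) = (1 + d) * (1 + a) / c"
proof -
  let ?\<delta> = "delta1 a b c d"
  have "?\<delta> * (d * (1 + c + d) * (1 + a)) = (1 + c + d) * (1 + a + b) + (1 + d) * a * b"
    using assms unfolding delta1_def by simp
  moreover have "c * ((1 + a) * ?\<delta> + (1 + a + b)) - (1 + d) * (1 + a) * ((c + d) * ?\<delta> - (1 + b))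
      = (1 + c + d) * (1 + a + b) + (1 + d) * a * b - ?\<delta> * (d * (1 + c + d) * (1 + a))"
    by (simp add: algebra_simps)
  ultimately have "c * ((1 + a) * ?\<delta> + (1 + a + b)) = (1 + d) * (1 + a) * ((c + d) * ?\<delta> - (1 + b))"
    by simp
  moreover have "(c + d) * ?\<delta> - (1 + b) \<noteq> 0"
    using delta1_admissible[OF assms] by simp
  ultimately show ?thesis
    using assms(3) unfolding balanced_D1_def by (simp add: field_simps)
qed

lemma balanced_D1_delta2:
  assumes "d > 0"
  shows "balanced_D1 a b c d (delta2 a b c d)
           = ((1 + a) * delta2 a b c d + (1 + a + b)) / (c * (delta2 a b c d + (1 + b)))"
proof -
  have "d * delta2 a b c d = (1 + c) * (1 + b)"
    using assms unfolding delta2_def by simp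
  then have "(c + d) * delta2 a b c d - (1 + b) = c * (delta2 a b c d + (1 + b))"
    by (simp add: algebra_simps)
  then show ?thesis
    unfolding balanced_D1_def by simp
qed

lemma maximizes_min_cut_on_curve:
  assumes pos: "a > 0" "b > 0" "c > 0" "d > 0"
    and range: "delta1 a b c d \<le> y" "y \<le> delta2 a b c d"
    and tie: "(y = delta2 a b c d \<and> 0 \<le> tie_quadratic a b c d y)
            \<or> (y = delta1 a b c d \<and> tie_quadratic a b c d y \<le> 0)
            \<or> tie_quadratic a b c d y = 0"
  shows "maximizes_min_cut a b c d (balanced_D1 a b c d y) y"
proof -
  define x where "x = balanced_D1 a b c d y"
  define E where "E = (\<lambda>\<Omega>. cut_arg a b c d \<Omega> (x / (1 + x)) (y / (1 + y)))"
  have "y > 0" and adm: "1 + b < (c + d) * y"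
    using admissible_if_delta1_le[OF pos range(1)] by simp_all
  have "x > 0"
    unfolding x_def using balanced_D1_pos[OF _ _ \<open>y > 0\<close> adm] pos by simp
  have "(1 + c) * (1 + b) - d * y = d * (delta2 a b c d - y)"
    using pos(4) by (simp add: delta2_def right_diff_distrib)
  then have cut1: "E {1} - E {1, 2} = x / (1 + x) * (d * (delta2 a b c d - y)) / (1 + y)"
    unfolding E_def cut_arg_1_sub_12[OF \<open>x > 0\<close> \<open>y > 0\<close>] by simp
  have "c * x \<le> c * balanced_D1 a b c d (delta1 a b c d)"
    unfolding x_def using pos range(1) delta1_admissible[OF pos]
    by (intro mult_left_mono balanced_D1_antimono) auto
  then have x_le: "c * x \<le> (1 + d) * (1 + a)"
    using pos(3) by (simp add: balanced_D1_delta1[OF pos])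
  have cut2: "E {2} - E {1, 2} = y / (1 + y) * ((1 + d) * (1 + a) - c * x) / (1 + x)"
    unfolding E_def cut_arg_2_sub_12[OF \<open>x > 0\<close> \<open>y > 0\<close>] ..
  have balanced: "E {} = E {1, 2}"
    unfolding E_def x_def using cut_arg_balanced_D1[OF _ _ \<open>y > 0\<close> adm] pos by simp
  have "0 \<le> x / (1 + x) * (d * (delta2 a b c d - y)) / (1 + y)"
    using range(2) pos(4) \<open>x > 0\<close> \<open>y > 0\<close> by simp
  moreover have "0 \<le> y / (1 + y) * ((1 + d) * (1 + a) - c * x) / (1 + x)"
    using x_le \<open>x > 0\<close> \<open>y > 0\<close> by simp
  ultimately have active: "E {1, 2} \<le> E {1}" "E {1, 2} \<le> E {2}"
    using cut1 cut2 by linarith+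
  have "y = delta2 a b c d \<Longrightarrow> E {1} = E {1, 2}"
    using cut1 by simp
  moreover have "y = delta1 a b c d \<Longrightarrow> E {2} = E {1, 2}"
    using cut2 balanced_D1_delta1[OF pos] pos(3) unfolding x_def by simp
  ultimately have "(E {1} = E {1, 2} \<and> b * (y / (1 + y)) \<le> a * (x / (1 + x)))
      \<or> (E {2} = E {1, 2} \<and> a * (x / (1 + x)) \<le> b * (y / (1 + y)))
      \<or> a * (x / (1 + x)) = b * (y / (1 + y))"
    using tie balanced_D1_tie_sign[OF _ _ _ _ \<open>y > 0\<close> adm] pos
    unfolding x_def by (metis order.antisym order.refl less_imp_le)
  then show ?thesis
    using maximizes_min_cut_if_balanced[of a b c d x y] pos \<open>x > 0\<close> \<open>y > 0\<close> balanced active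
    unfolding x_def[symmetric] E_def by simp
qed

lemma maximizes_min_cut_delta2:
  assumes pos: "a > 0" "b > 0" "c > 0" "d > 0"
    and "0 \<le> tie_lead a b c d \<or> delta2 a b c d \<le> delta3 a b c d"
  shows "maximizes_min_cut a b c d (balanced_D1 a b c d (delta2 a b c d)) (delta2 a b c d)"
proof (rule maximizes_min_cut_on_curve[OF pos delta1_le_delta2[OF pos] order.refl])
  have "0 \<le> delta2 a b c d"
    using pos unfolding delta2_def by simp
  moreover have "0 \<le> tie_quadratic a b c d y" if "0 \<le> tie_lead a b c d" "0 \<le> y" for y
    unfolding tie_quadratic_def using that pos by (intro add_nonneg_nonneg mult_nonneg_nonneg) auto
  ultimately have "0 \<le> tie_quadratic a b c d (delta2 a b c d)"
    using assms(5) tie_quadratic_sign(1)[of a b c d "delta2 a b c d"] pos by force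
  then show "(delta2 a b c d = delta2 a b c d \<and> 0 \<le> tie_quadratic a b c d (delta2 a b c d))
      \<or> (delta2 a b c d = delta1 a b c d \<and> tie_quadratic a b c d (delta2 a b c d) \<le> 0)
      \<or> tie_quadratic a b c d (delta2 a b c d) = 0"
    by simp
qed

lemma maximizes_min_cut_delta1:
  assumes pos: "a > 0" "b > 0" "c > 0" "d > 0"
    and "tie_lead a b c d < 0" "delta3 a b c d < delta1 a b c d"
  shows "maximizes_min_cut a b c d (balanced_D1 a b c d (delta1 a b c d)) (delta1 a b c d)"
  using maximizes_min_cut_on_curve[OF pos order.refl delta1_le_delta2[OF pos]]
    tie_quadratic_sign(2)[of a b c d] assms
  by (simp add: less_imp_le)

lemma maximizes_min_cut_delta3:
  assumes pos: "a > 0" "b > 0" "c > 0" "d > 0"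
    and "tie_lead a b c d < 0" "delta1 a b c d \<le> delta3 a b c d" "delta3 a b c d < delta2 a b c d"
  shows "maximizes_min_cut a b c d (balanced_D1 a b c d (delta3 a b c d)) (delta3 a b c d)"
  using maximizes_min_cut_on_curve[OF pos assms(6) less_imp_le[OF assms(7)]]
    tie_quadratic_sign(3)[of a b c d] assms
  by simp

theorem theorem1:
  fixes h1 h2 g1 g2 :: real
  assumes "h1 > 0" "h2 > 0" "g1 > 0" "g2 > 0"
  defines "\<delta>1 \<equiv> ((1 + g1\<^sup>2 + g2\<^sup>2) * (1 + h1\<^sup>2 + h2\<^sup>2) + (1 + g2\<^sup>2) * h1\<^sup>2 * h2\<^sup>2)
                  / (g2\<^sup>2 * (1 + g1\<^sup>2 + g2\<^sup>2) * (1 + h1\<^sup>2))"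
    and "\<delta>2 \<equiv> (1 + g1\<^sup>2) * (1 + h2\<^sup>2) / g2\<^sup>2"
    and "A \<equiv> h1\<^sup>2 * (1 + h1\<^sup>2) - h2\<^sup>2 * (1 + h1\<^sup>2 + g1\<^sup>2 + g2\<^sup>2)"
    and "\<delta>3 \<equiv> (- (2 * h1\<^sup>2 * (1 + h1\<^sup>2))
                 - sqrt ((2 * h1\<^sup>2 * (1 + h1\<^sup>2))\<^sup>2
                         - 4 * (h1\<^sup>2 * (1 + h1\<^sup>2) - h2\<^sup>2 * (1 + h1\<^sup>2 + g1\<^sup>2 + g2\<^sup>2))
                             * (h1\<^sup>2 * (1 + h1\<^sup>2 + h2\<^sup>2))))
                / (2 * (h1\<^sup>2 * (1 + h1\<^sup>2) - h2\<^sup>2 * (1 + h1\<^sup>2 + g1\<^sup>2 + g2\<^sup>2)))"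
    and "D1of \<equiv> (\<lambda>d::real. ((1 + h1\<^sup>2) * d + (1 + h1\<^sup>2 + h2\<^sup>2)) / ((g1\<^sup>2 + g2\<^sup>2) * d - (1 + h2\<^sup>2)))"
  shows "(A \<ge> 0 \<or> \<delta>3 \<in> {\<delta>2..} \<longrightarrow>
            optimal_QMF h1 h2 g1 g2 (D1of \<delta>2) \<delta>2 \<and>
            D1of \<delta>2 = ((1 + h1\<^sup>2) * \<delta>2 + (1 + h1\<^sup>2 + h2\<^sup>2)) / (g1\<^sup>2 * (\<delta>2 + (1 + h2\<^sup>2))))
       \<and> (A < 0 \<and> \<delta>3 \<in> {0<..<\<delta>1} \<longrightarrow>
            optimal_QMF h1 h2 g1 g2 (D1of \<delta>1) \<delta>1 \<and>
            D1of \<delta>1 = (1 + g2\<^sup>2) * (1 + h1\<^sup>2) / g1\<^sup>2)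
       \<and> (A < 0 \<and> \<delta>3 \<in> {\<delta>1..<\<delta>2} \<longrightarrow>
            optimal_QMF h1 h2 g1 g2 (D1of \<delta>3) \<delta>3)"
proof -
  let ?a = "h1\<^sup>2" and ?b = "h2\<^sup>2" and ?c = "g1\<^sup>2" and ?d = "g2\<^sup>2"
  have pos: "?a > 0" "?b > 0" "?c > 0" "?d > 0"
    using assms(1-4) by simp_all
  have params: "\<delta>1 = delta1 ?a ?b ?c ?d" "\<delta>2 = delta2 ?a ?b ?c ?d" "A = tie_lead ?a ?b ?c ?d"
    "\<delta>3 = delta3 ?a ?b ?c ?d" "D1of = balanced_D1 ?a ?b ?c ?d"
    unfolding \<delta>1_def \<delta>2_def A_def \<delta>3_def D1of_def delta1_def delta2_def tie_lead_def delta3_def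
      balanced_D1_def[abs_def] by (rule refl)+
  show ?thesis
    unfolding params
    using optimal_QMF_if_maximizes_min_cut maximizes_min_cut_delta2[OF pos]
      maximizes_min_cut_delta1[OF pos] maximizes_min_cut_delta3[OF pos]
      balanced_D1_delta2[OF pos(4)] balanced_D1_delta1[OF pos]
    by auto
qed

end
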